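(* Consider the Latex Particles Morphology Formation population balance system described in the context, with parameters $a \in \mathbb{R}$, $0<b<1$ and $v_0 = \lambda_{\mathrm{c}} > 0$. If $m(v,t)$, $w(v,t)$ are the solutions of this system, then $m(v,t) = w(v,t) = 0$ for all $v \in [0,v_0)$ and all $t \in \mathbb{R}^+$.
   Context: Fix real constants $a,b$ and positive constants $\lambda_{\mathrm{a}},\lambda_{\mathrm{c}},\lambda_{\mathrm{d}},\lambda_{\mathrm{m}},\lambda_{\mathrm{n}},\lambda_{\mathrm{p}},\lambda_{\mathrm{pol1}}$, $\bar\Psi>0$, $\Psi_r>0$, $\Phi_s\in(0,1)$. Set $v_0:=\lambda_{\mathrm{c}}$ and $\mu:=\lambda_{\mathrm{m}}$. The unknowns are densities $m(v,t), w(v,t)$ ($v,t\ge 0$) and scalar functions $V^{\mathrm{mat}}(t),V^{\mathrm{c_m}}(t),V^{\mathrm{c_w}}(t),\Psi(t),V_{\mathrm{pol2}}(t)$. Define $\alpha(v,u,t):=\tilde\alpha_0(t)[v^a+u^a]$, $\tilde\alpha_0(t):=\lambda_{\mathrm{a}}(\Psi(t)+1)^{14/3}$; $g(v,t):=\tilde\varrho_{\mathrm{d}}(t)v^b+\tilde\varrho_{\mathrm{p}}(t)v$, $\tilde\varrho_{\mathrm{p}}(t):=\lambda_{\mathrm{p}}\Psi(t)/V_p(t)$, $\tilde\varrho_{\mathrm{d}}(t):=\lambda_{\mathrm{d}}\Phi(t)(\Psi(t)+1)^{2/3}$; $n(v,t):=\tilde\eta_0(t)\delta(v-v_0)$ with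 $\tilde\eta_0(t):=\lambda_{\mathrm{n}}\Phi(t)$ and $\delta$ the Dirac delta; $\Phi(t):=\max\{V^{\mathrm{mat}}(t)/[(\Psi(t)+1)(V^{\mathrm{mat}}(t)+\lambda_{\mathrm{pol1}})]-\Phi_s,0\}$; $V_p(t):=(\Psi(t)+1)[V^{\mathrm{mat}}(t)+V^{\mathrm{c_m}}(t)+V^{\mathrm{c_w}}(t)+\lambda_{\mathrm{pol1}}]$; $\Sigma_y(t):=(\Psi(t)+1)^{2/3}\int_0^\infty v^b y(v,t)\,dv$ for $y=m,w$. The system is: for all $v,t>0$, $\partial_t m=-\partial_v(g m)+n-\mu m-m(v,t)\int_0^\infty\alpha(v,u,t)m(u,t)\,du+\tfrac12\int_0^v\alpha(v-u,u,t)m(v-u,t)m(u,t)\,du$, $\partial_t w=-\partial_v(g w)+\mu m-w(v,t)\int_0^\infty\alpha(v,u,t)w(u,t)\,du+\tfrac12\int_0^v\alpha(v-u,u,t)w(v-u,t)w(u,t)\,du$, with $m(v,0)=w(v,0)=0$, $m(0,t)=w(0,t)=0$; coupled to the ODEs $\dot V^{\mathrm{mat}}=\lambda_{\mathrm{p}}\frac{\Psi}{V_p}(V^{\mathrm{mat}}+\lambda_{\mathrm{pol1}})-\Phi[\lambda_{\mathrm{c}}\lambda_{\mathrm{n}}+\lambda_{\mathrm{d}}\Sigma_m+\lambda_{\mathrm{d}}\Sigma_w]$, $\dot V^{\mathrm{c_m}}=\lambda_{\mathrm{p}}\frac{\Psi}{V_p}V^{\mathrm{c_m}}+\Phi[\lambda_{\mathrm{c}}\lambda_{\mathrm{n}}+\lambda_{\mathrm{d}}\Sigma_m]-\lambda_{\mathrm{m}}V^{\mathrm{c_m}}$,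 $\dot V^{\mathrm{c_w}}=\lambda_{\mathrm{p}}\frac{\Psi}{V_p}V^{\mathrm{c_w}}+\lambda_{\mathrm{d}}\Phi\Sigma_w+\lambda_{\mathrm{m}}V^{\mathrm{c_m}}$, $\dot\Psi=-\lambda_{\mathrm{p}}\frac{\Psi}{\Psi+1}\frac{\Psi+\Psi_r}{V_{\mathrm{pol2}}+\lambda_{\mathrm{pol1}}}$, $\dot V_{\mathrm{pol2}}=\lambda_{\mathrm{p}}\frac{\Psi}{\Psi+1}$, with $V^{\mathrm{mat}}(0)=V^{\mathrm{c_m}}(0)=V^{\mathrm{c_w}}(0)=V_{\mathrm{pol2}}(0)=0$, $\Psi(0)=\bar\Psi$. Solutions $m,w$ are understood to be non-negative functions. *)

theory Defs
  imports "HOL-Analysis.Analysis"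
begin

text \<open>Parameters: la = lambda_a, lc = lambda_c (= v0), ld = lambda_d, lm = lambda_m (= mu),
  lnn = lambda_n, lp = lambda_p, lpol1 = lambda_pol1, Psir = Psi_r, Phis = Phi_s.\<close>

definition Phi_of :: "real \<Rightarrow> real \<Rightarrow> real \<Rightarrow> real \<Rightarrow> real" where
  "Phi_of lpol1 Phis Vmat Psi = max (Vmat / ((Psi + 1) * (Vmat + lpol1)) - Phis) 0"

definition Vp_of :: "real \<Rightarrow> real \<Rightarrow> real \<Rightarrow> real \<Rightarrow> real \<Rightarrow> real" where
  "Vp_of lpol1 Vmat Vcm Vcw Psi = (Psi + 1) * (Vmat + Vcm + Vcw + lpol1)"

definition alpha_of :: "real \<Rightarrow> real \<Rightarrow> real \<Rightarrow> real \<Rightarrow> real \<Rightarrow> real" where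
  "alpha_of a la Psi v u = la * (Psi + 1) powr (14/3) * (v powr a + u powr a)"

definition g_of :: "real \<Rightarrow> real \<Rightarrow> real \<Rightarrow> real \<Rightarrow> real \<Rightarrow> real \<Rightarrow> real \<Rightarrow> real \<Rightarrow> real \<Rightarrow> real \<Rightarrow> real" where
  "g_of b ld lp lpol1 Phis Vmat Vcm Vcw Psi v =
     ld * Phi_of lpol1 Phis Vmat Psi * (Psi + 1) powr (2/3) * v powr b
     + lp * Psi / Vp_of lpol1 Vmat Vcm Vcw Psi * v"

definition Sigma_of :: "real \<Rightarrow> real \<Rightarrow> (real \<Rightarrow> real) \<Rightarrow> real" where
  "Sigma_of b Psi y = (Psi + 1) powr (2/3) * (LINT v:{0<..}|lborel. v powr b * y v)"

definition loss_of :: "real \<Rightarrow> real \<Rightarrow> real \<Rightarrow> (real \<Rightarrow> real) \<Rightarrow> real \<Rightarrow> real" where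
  "loss_of a la Psi y v = y v * (LINT u:{0<..}|lborel. alpha_of a la Psi v u * y u)"

definition gain_of :: "real \<Rightarrow> real \<Rightarrow> real \<Rightarrow> (real \<Rightarrow> real) \<Rightarrow> real \<Rightarrow> real" where
  "gain_of a la Psi y v =
     1/2 * (LINT u:{0<..<v}|lborel. alpha_of a la Psi (v - u) u * y (v - u) * y u)"

text \<open>The nucleation term
  n(v,t) = eta0(t) delta(v - v0) vanishes for v \<noteq> v0; the PDEs are required to hold
  pointwise for all v > 0 with v \<noteq> v0 and t > 0 (a jump of m, w across v = v0 is allowed).\<close>
definition is_solution ::
  "real \<Rightarrow> real \<Rightarrow> real \<Rightarrow> real \<Rightarrow> real \<Rightarrow> real \<Rightarrow> real \<Rightarrow> real \<Rightarrow> real \<Rightarrow> real \<Rightarrow> real \<Rightarrow> real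
   \<Rightarrow> (real \<Rightarrow> real \<Rightarrow> real) \<Rightarrow> (real \<Rightarrow> real \<Rightarrow> real)
   \<Rightarrow> (real \<Rightarrow> real) \<Rightarrow> (real \<Rightarrow> real) \<Rightarrow> (real \<Rightarrow> real) \<Rightarrow> (real \<Rightarrow> real) \<Rightarrow> (real \<Rightarrow> real) \<Rightarrow> bool"
where
  "is_solution a b la lc ld lm lnn lp lpol1 Psibar Psir Phis m w Vmat Vcm Vcw Psi Vpol2 \<longleftrightarrow>
   (let v0 = lc; mu = lm;
        Phi = (\<lambda>t. Phi_of lpol1 Phis (Vmat t) (Psi t));
        Vp = (\<lambda>t. Vp_of lpol1 (Vmat t) (Vcm t) (Vcw t) (Psi t));
        g = (\<lambda>v t. g_of b ld lp lpol1 Phis (Vmat t) (Vcm t) (Vcw t) (Psi t) v);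
        Sm = (\<lambda>t. Sigma_of b (Psi t) (\<lambda>v. m v t));
        Sw = (\<lambda>t. Sigma_of b (Psi t) (\<lambda>v. w v t))
    in
     \<comment> \<open>non-negativity\<close>
     (\<forall>v t. 0 \<le> m v t \<and> 0 \<le> w v t) \<and>
     \<comment> \<open>initial and boundary conditions\<close>
     (\<forall>v\<ge>0. m v 0 = 0 \<and> w v 0 = 0) \<and>
     (\<forall>t\<ge>0. m 0 t = 0 \<and> w 0 t = 0) \<and>
     \<comment> \<open>continuity of the densities away from the nucleation size\<close>
     continuous_on {(v, t). 0 \<le> v \<and> v \<noteq> v0 \<and> 0 \<le> t} (\<lambda>(v, t). m v t) \<and>
     continuous_on {(v, t). 0 \<le> v \<and> v \<noteq> v0 \<and> 0 \<le> t} (\<lambda>(v, t). w v t) \<and>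
     \<comment> \<open>existence of the integrals\<close>
     (\<forall>t>0. set_integrable lborel {0<..} (\<lambda>v. v powr b * m v t) \<and>
             set_integrable lborel {0<..} (\<lambda>v. v powr b * w v t)) \<and>
     (\<forall>v>0. \<forall>t>0.
        set_integrable lborel {0<..} (\<lambda>u. alpha_of a la (Psi t) v u * m u t) \<and>
        set_integrable lborel {0<..} (\<lambda>u. alpha_of a la (Psi t) v u * w u t) \<and>
        set_integrable lborel {0<..<v} (\<lambda>u. alpha_of a la (Psi t) (v - u) u * m (v - u) t * m u t) \<and>
        set_integrable lborel {0<..<v} (\<lambda>u. alpha_of a la (Psi t) (v - u) u * w (v - u) t * w u t)) \<and>
     \<comment> \<open>population balance equations (n = 0 for v \<noteq> v0)\<close>
     (\<forall>v t. 0 < v \<and> v \<noteq> v0 \<and> 0 < t \<longrightarrow>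
        (\<exists>Dt Dv. ((\<lambda>s. m v s) has_real_derivative Dt) (at t) \<and>
                 ((\<lambda>x. g x t * m x t) has_real_derivative Dv) (at v) \<and>
                 Dt = - Dv - mu * m v t - loss_of a la (Psi t) (\<lambda>u. m u t) v
                      + gain_of a la (Psi t) (\<lambda>u. m u t) v)) \<and>
     (\<forall>v t. 0 < v \<and> v \<noteq> v0 \<and> 0 < t \<longrightarrow>
        (\<exists>Dt Dv. ((\<lambda>s. w v s) has_real_derivative Dt) (at t) \<and>
                 ((\<lambda>x. g x t * w x t) has_real_derivative Dv) (at v) \<and>
                 Dt = - Dv + mu * m v t - loss_of a la (Psi t) (\<lambda>u. w u t) v
                      + gain_of a la (Psi t) (\<lambda>u. w u t) v)) \<and>
     \<comment> \<open>ODEs\<close>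
     continuous_on {0..} Vmat \<and> continuous_on {0..} Vcm \<and> continuous_on {0..} Vcw \<and>
     continuous_on {0..} Psi \<and> continuous_on {0..} Vpol2 \<and>
     Vmat 0 = 0 \<and> Vcm 0 = 0 \<and> Vcw 0 = 0 \<and> Vpol2 0 = 0 \<and> Psi 0 = Psibar \<and>
     (\<forall>t>0.
        (Vmat has_real_derivative
           (lp * Psi t / Vp t * (Vmat t + lpol1) - Phi t * (lc * lnn + ld * Sm t + ld * Sw t))) (at t) \<and>
        (Vcm has_real_derivative
           (lp * Psi t / Vp t * Vcm t + Phi t * (lc * lnn + ld * Sm t) - lm * Vcm t)) (at t) \<and>
        (Vcw has_real_derivative
           (lp * Psi t / Vp t * Vcw t + ld * Phi t * Sw t + lm * Vcm t)) (at t) \<and>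
        (Psi has_real_derivative
           (- lp * (Psi t / (Psi t + 1)) * ((Psi t + Psir) / (Vpol2 t + lpol1)))) (at t) \<and>
        (Vpol2 has_real_derivative (lp * (Psi t / (Psi t + 1)))) (at t)))"

end

(*
  Below the nucleation size v0 no particles are created, so m and w are governed there by
  transport, removal and coagulation alone, and vanish by a maximum principle. Suppose y (= m
  or w) is positive somewhere in [0, V] x [0, T] and take a maximum point (v, t) of
  exp (-t) * y. Then v, t > 0 and y (., t) is maximal on (0, v] at v. Hence
  d/dv (g y) >= 0 there, because the growth rate g is nonnegative and nondecreasing in v; and
  the coagulation gain is at most the loss, because for the additive kernel
  alpha = k(v) + k(u) the gain integrand is at most y(v) * ((k y)(v - u) + (k y)(u)), whose
  integral over (0, v) is 2 y(v) times the integral of k y, and k(u) <= k(v) + k(u).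
  So d/dt y <= 0, while maximality in t forces d/dt y >= y > 0. The monotonicity of g needs
  Psi > 0 and a nonnegative total volume Vmat + Vcm + Vcw, which follow from the ODEs. The
  argument applies to m first; then the source term lm * m of w vanishes below v0.
*)
theory Submission
  imports Defs
begin

lemma set_integral_reflect_interval:
  fixes f :: "real \<Rightarrow> 'a::{banach, second_countable_topology}"
  shows "(LBINT u:{a<..<b}. f (a + b - u)) = (LBINT u:{a<..<b}. f u)"
  unfolding set_lebesgue_integral_def
  by (subst lborel_integral_real_affine[where c = "-1" and t = "a + b"])
     (auto intro!: Bochner_Integration.integral_cong split: split_indicator)

lemma set_integrable_reflect_interval:
  fixes f :: "real \<Rightarrow> 'a::{banach, second_countable_topology}"
  assumes "set_integrable lborel {a<..<b} f"
  shows "set_integrable lborel {a<..<b} (\<lambda>u. f (a + b - u))"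
proof -
  have "integrable lborel (\<lambda>u. indicator {a<..<b} (a + b + (-1) * u) *\<^sub>R f (a + b + (-1) * u))"
    using assms unfolding set_integrable_def by (intro lborel_integrable_real_affine) auto
  then show ?thesis
    unfolding set_integrable_def
    by (rule Bochner_Integration.integrable_cong[THEN iffD1, rotated 2]) (auto split: split_indicator)
qed

lemma set_integral_mono_set:
  fixes f :: "'a \<Rightarrow> real"
  assumes f: "set_integrable M A f" and B: "B \<in> sets M" "B \<subseteq> A"
    and nonneg: "\<And>x. x \<in> A \<Longrightarrow> 0 \<le> f x"
  shows "(LINT x:B|M. f x) \<le> (LINT x:A|M. f x)"
proof -
  have "set_integrable M B f"
    using f B by (rule set_integrable_subset)
  then show ?thesis
    using f B nonneg unfolding set_integrable_def set_lebesgue_integral_def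
    by (intro integral_mono) (auto split: split_indicator)
qed

lemma set_integrable_kernel_summand:
  fixes k y :: "real \<Rightarrow> real"
  assumes [measurable]: "k \<in> borel_measurable borel"
    and k_nonneg: "\<And>u. 0 \<le> k u" and "0 \<le> c"
    and int: "set_integrable lborel A (\<lambda>u. (c + k u) * y u)"
  shows "set_integrable lborel A (\<lambda>u. k u * y u)"
proof (rule set_integrable_bound[OF int])
  \<comment> \<open>Measurability is inherited from the integrable function, as k = (c + k) * (k / (c + k)).\<close>
  have "indicator A u *\<^sub>R (k u * y u) = indicator A u *\<^sub>R ((c + k u) * y u) * (k u / (c + k u))" for u
    using k_nonneg[of u] \<open>0 \<le> c\<close> by (cases "c + k u = 0") auto
  moreover note borel_measurable_integrable[OF int[unfolded set_integrable_def], measurable]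
  ultimately show "set_borel_measurable lborel A (\<lambda>u. k u * y u)"
    unfolding set_borel_measurable_def by (simp only:) measurable
  show "AE u in lborel. u \<in> A \<longrightarrow> norm (k u * y u) \<le> norm ((c + k u) * y u)"
    using k_nonneg \<open>0 \<le> c\<close> by (intro AE_I2) (simp add: abs_mult mult_right_mono)
qed

lemma additive_kernel_gain_le_loss:
  fixes k y :: "real \<Rightarrow> real" and v :: real
  assumes k_meas: "k \<in> borel_measurable borel" and k_nonneg: "\<And>u. 0 \<le> k u"
    and y_nonneg: "\<And>u. 0 \<le> y u"
    and y_max: "\<And>u. 0 < u \<Longrightarrow> u < v \<Longrightarrow> y u \<le> y v"
    and int_loss: "set_integrable lborel {0<..} (\<lambda>u. (k v + k u) * y u)"
    and int_gain: "set_integrable lborel {0<..<v} (\<lambda>u. (k (v - u) + k u) * y (v - u) * y u)"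
  shows "(LBINT u:{0<..<v}. (k (v - u) + k u) * y (v - u) * y u)
           \<le> 2 * y v * (LBINT u:{0<..}. (k v + k u) * y u)"
proof -
  define H where "H u = k u * y u" for u
  have H_le: "0 \<le> H u" "H u \<le> (k v + k u) * y u" for u
    using k_nonneg[of u] k_nonneg[of v] y_nonneg[of u] by (auto simp: H_def mult_right_mono)
  have int_H: "set_integrable lborel {0<..} H"
    unfolding H_def by (rule set_integrable_kernel_summand[OF k_meas k_nonneg k_nonneg int_loss])
  then have int_Hv: "set_integrable lborel {0<..<v} H"
    by (rule set_integrable_subset) auto
  have int_Hv_refl: "set_integrable lborel {0<..<v} (\<lambda>u. H (v - u))"
    using set_integrable_reflect_interval[OF int_Hv] by simp
  have "(LBINT u:{0<..<v}. (k (v - u) + k u) * y (v - u) * y u)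
          \<le> (LBINT u:{0<..<v}. y v * (H (v - u) + H u))"
  proof (rule set_integral_mono[OF int_gain])
    show "set_integrable lborel {0<..<v} (\<lambda>u. y v * (H (v - u) + H u))"
      using int_Hv int_Hv_refl by auto
    fix u assume "u \<in> {0<..<v}"
    then have "y (v - u) \<le> y v" "y u \<le> y v" using y_max by auto
    then have "H (v - u) * y u + H u * y (v - u) \<le> H (v - u) * y v + H u * y v"
      using H_le by (intro add_mono mult_left_mono) auto
    then show "(k (v - u) + k u) * y (v - u) * y u \<le> y v * (H (v - u) + H u)"
      unfolding H_def by (simp add: algebra_simps)
  qed
  also have "\<dots> = 2 * y v * (LBINT u:{0<..<v}. H u)"
    using int_Hv int_Hv_refl set_integral_reflect_interval[where f = H and a = 0 and b = v] by simp
  also have "\<dots> \<le> 2 * y v * (LBINT u:{0<..}. (k v + k u) * y u)"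
  proof (intro mult_left_mono)
    have "(LBINT u:{0<..<v}. H u) \<le> (LBINT u:{0<..}. H u)"
      using int_H H_le by (intro set_integral_mono_set) auto
    also have "\<dots> \<le> (LBINT u:{0<..}. (k v + k u) * y u)"
      using int_H H_le by (intro set_integral_mono[OF _ int_loss])
    finally show "(LBINT u:{0<..<v}. H u) \<le> (LBINT u:{0<..}. (k v + k u) * y u)" .
  qed (use y_nonneg in auto)
  finally show ?thesis .
qed

lemma gain_of_le_loss_of:
  fixes y :: "real \<Rightarrow> real"
  assumes "0 < la"
    and y_nonneg: "\<And>u. 0 \<le> y u" and y_max: "\<And>u. 0 < u \<Longrightarrow> u < v \<Longrightarrow> y u \<le> y v"
    and int_loss: "set_integrable lborel {0<..} (\<lambda>u. alpha_of a la P v u * y u)"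
    and int_gain: "set_integrable lborel {0<..<v} (\<lambda>u. alpha_of a la P (v - u) u * y (v - u) * y u)"
  shows "gain_of a la P y v \<le> loss_of a la P y v"
proof -
  define k where "k u = la * (P + 1) powr (14/3) * u powr a" for u
  have alpha: "alpha_of a la P x u = k x + k u" for x u
    unfolding alpha_of_def k_def by (simp add: algebra_simps)
  have "k \<in> borel_measurable borel" unfolding k_def by measurable
  moreover have "0 \<le> k u" for u unfolding k_def using \<open>0 < la\<close> by simp
  ultimately show ?thesis
    using additive_kernel_gain_le_loss[of k y v] y_nonneg y_max int_loss int_gain
    unfolding gain_of_def loss_of_def alpha by simp
qed

lemma DERIV_nonneg_at_left_max:
  fixes f :: "real \<Rightarrow> real"
  assumes f': "(f has_real_derivative D) (at x)" and "0 < d"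
    and left_max: "\<And>h. 0 < h \<Longrightarrow> h < d \<Longrightarrow> f (x - h) \<le> f x"
  shows "0 \<le> D"
proof (rule ccontr)
  assume "\<not> 0 \<le> D"
  then obtain e where "0 < e" and e: "\<And>h. 0 < h \<Longrightarrow> h < e \<Longrightarrow> f x < f (x - h)"
    using DERIV_neg_dec_left[OF f'] by force
  have "f x < f (x - min d e / 2)" using \<open>0 < e\<close> \<open>0 < d\<close> by (intro e) auto
  moreover have "f (x - min d e / 2) \<le> f x" using \<open>0 < e\<close> \<open>0 < d\<close> by (intro left_max) auto
  ultimately show False by simp
qed

lemma transport_maximum_principle:
  fixes y g :: "real \<Rightarrow> real \<Rightarrow> real" and V T :: real
  assumes "0 \<le> V" "0 \<le> T"
    and cont: "continuous_on ({0..V} \<times> {0..T}) (\<lambda>(v, t). y v t)"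
    and y_nonneg: "\<And>v t. 0 \<le> y v t"
    and boundary: "\<And>t. 0 \<le> t \<Longrightarrow> y 0 t = 0"
    and initial: "\<And>v. 0 \<le> v \<Longrightarrow> y v 0 = 0"
    and g_mono: "\<And>t x v. 0 < t \<Longrightarrow> 0 \<le> x \<Longrightarrow> x \<le> v \<Longrightarrow> 0 \<le> g x t \<and> g x t \<le> g v t"
    and transport: "\<And>v t. 0 < v \<Longrightarrow> v \<le> V \<Longrightarrow> 0 < t \<Longrightarrow> t \<le> T \<Longrightarrow> 0 < y v t \<Longrightarrow>
       (\<And>u. 0 < u \<Longrightarrow> u < v \<Longrightarrow> y u t \<le> y v t) \<Longrightarrow>
       \<exists>Dt Dv. ((\<lambda>s. y v s) has_real_derivative Dt) (at t) \<and>
               ((\<lambda>x. g x t * y x t) has_real_derivative Dv) (at v) \<and> Dt \<le> - Dv"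
  shows "y V T = 0"
proof (rule ccontr)
  assume "y V T \<noteq> 0"
  then have "0 < y V T" using y_nonneg[of V T] by simp
  let ?K = "{0..V} \<times> {0..T}"
  let ?phi = "\<lambda>(v, t). exp (- t) * y v t"
  have "continuous_on ?K ?phi"
    using cont by (simp add: case_prod_beta') (intro continuous_intros)
  moreover have "compact ?K" "?K \<noteq> {}" using assms(1,2) by (auto intro: compact_Times)
  ultimately obtain v t where vt: "(v, t) \<in> ?K" and max: "\<And>q. q \<in> ?K \<Longrightarrow> ?phi q \<le> ?phi (v, t)"
    using continuous_attains_sup[of ?K ?phi] by auto
  have "0 < exp (- T) * y V T" using \<open>0 < y V T\<close> by simp
  also have "\<dots> \<le> exp (- t) * y v t" using max[of "(V, T)"] assms(1,2) by simp
  finally have "0 < y v t" by (simp add: zero_less_mult_iff)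
  with boundary initial vt have "0 < v" "0 < t" by (fastforce simp: less_le)+
  have left_max: "y u t \<le> y v t" if "0 < u" "u < v" for u
    using max[of "(u, t)"] that vt by simp
  obtain Dt Dv where Dt: "((\<lambda>s. y v s) has_real_derivative Dt) (at t)"
    and Dv: "((\<lambda>x. g x t * y x t) has_real_derivative Dv) (at v)" and "Dt \<le> - Dv"
    using transport[of v t] vt \<open>0 < v\<close> \<open>0 < t\<close> \<open>0 < y v t\<close> left_max by auto
  have "0 \<le> Dv"
  proof (rule DERIV_nonneg_at_left_max[OF Dv \<open>0 < v\<close>])
    fix h assume "0 < h" "h < v"
    then show "g (v - h) t * y (v - h) t \<le> g v t * y v t"
      using g_mono[of t "v - h" v] left_max[of "v - h"] \<open>0 < t\<close> y_nonneg
      by (intro mult_mono) auto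
  qed
  \<comment> \<open>The weight exp (- t) makes the time derivative at the maximum strictly positive.\<close>
  have "((\<lambda>s. exp (- s) * y v s) has_real_derivative exp (- t) * (Dt - y v t)) (at t)"
    using Dt by (auto intro!: derivative_eq_intros simp: algebra_simps)
  then have "0 \<le> exp (- t) * (Dt - y v t)"
    by (rule DERIV_nonneg_at_left_max[OF _ \<open>0 < t\<close>]) (use max[of "(v, t - _)"] vt in auto)
  then have "y v t \<le> Dt" by (simp add: zero_le_mult_iff)
  with \<open>0 \<le> Dv\<close> \<open>Dt \<le> - Dv\<close> \<open>0 < y v t\<close> show False by linarith
qed

lemma pos_on_interval_by_continuation:
  fixes f :: "real \<Rightarrow> real"
  assumes cont: "continuous_on {a..b} f" and "0 < f a"
    and continue: "\<And>s. a < s \<Longrightarrow> s \<le> b \<Longrightarrow> (\<And>t. a \<le> t \<Longrightarrow> t < s \<Longrightarrow> 0 < f t) \<Longrightarrow> 0 < f s"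
    and t: "a \<le> t" "t \<le> b"
  shows "0 < f t"
proof (rule ccontr)
  assume "\<not> 0 < f t"
  define Z where "Z = {a..b} \<inter> f -` {..0}"
  have "closed Z" unfolding Z_def by (rule continuous_closed_preimage[OF cont]) auto
  moreover have "Z \<noteq> {}" using \<open>\<not> 0 < f t\<close> t unfolding Z_def by auto
  moreover have bdd: "bdd_below Z" unfolding Z_def by (rule bdd_belowI[of _ a]) auto
  ultimately have "Inf Z \<in> Z" by (rule closed_contains_Inf[rotated -1])
  then have "a < Inf Z" "Inf Z \<le> b" "\<not> 0 < f (Inf Z)"
    using \<open>0 < f a\<close> unfolding Z_def by (auto simp: less_le)
  moreover have "0 < f s" if "a \<le> s" "s < Inf Z" for s
    using cInf_lower[OF _ bdd, of s] that \<open>Inf Z \<le> b\<close> unfolding Z_def by force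
  ultimately show False using continue by blast
qed

lemma pos_if_DERIV_ge_neg_linear:
  fixes f f' :: "real \<Rightarrow> real" and K s :: real
  assumes "0 \<le> s" and cont: "continuous_on {0..s} f" and "0 < f 0"
    and f': "\<And>x. 0 < x \<Longrightarrow> x < s \<Longrightarrow> (f has_real_derivative f' x) (at x)"
    and f'_ge: "\<And>x. 0 < x \<Longrightarrow> x < s \<Longrightarrow> - K * f x \<le> f' x"
  shows "0 < f s"
proof -
  have "exp (K * 0) * f 0 \<le> exp (K * s) * f s"
  proof (rule DERIV_nonneg_imp_increasing_open[OF \<open>0 \<le> s\<close>])
    fix x assume x: "0 < x" "x < s"
    have "((\<lambda>x. exp (K * x) * f x) has_real_derivative exp (K * x) * (K * f x + f' x)) (at x)"
      using f'[OF x] by (auto intro!: derivative_eq_intros simp: algebra_simps)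
    moreover have "0 \<le> exp (K * x) * (K * f x + f' x)"
      using f'_ge[OF x] by simp
    ultimately show "\<exists>D. ((\<lambda>x. exp (K * x) * f x) has_real_derivative D) (at x) \<and> 0 \<le> D"
      by blast
  qed (use cont in \<open>intro continuous_intros\<close>)
  then have "0 < exp (K * s) * f s" using \<open>0 < f 0\<close> by simp
  then show ?thesis by (simp add: zero_less_mult_iff)
qed

lemma Psi_pos:
  fixes Psi Vpol2 :: "real \<Rightarrow> real" and lp lpol1 Psir t :: real
  assumes "0 < lp" "0 < lpol1" "0 < Psir" "0 < Psi 0" "Vpol2 0 = 0"
    and cont: "continuous_on {0..} Psi" "continuous_on {0..} Vpol2"
    and Psi': "\<And>t. 0 < t \<Longrightarrow> (Psi has_real_derivative
           - lp * (Psi t / (Psi t + 1)) * ((Psi t + Psir) / (Vpol2 t + lpol1))) (at t)"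
    and Vpol2': "\<And>t. 0 < t \<Longrightarrow> (Vpol2 has_real_derivative lp * (Psi t / (Psi t + 1))) (at t)"
    and "0 \<le> t"
  shows "0 < Psi t"
proof (rule pos_on_interval_by_continuation[of 0 t Psi])
  fix s assume "0 < s" "s \<le> t" and pos: "\<And>r. 0 \<le> r \<Longrightarrow> r < s \<Longrightarrow> 0 < Psi r"
  have cont_s: "continuous_on {0..s} Psi" "continuous_on {0..r} Vpol2" for r
    using cont by (auto elim: continuous_on_subset)
  have Vpol2_nonneg: "0 \<le> Vpol2 r" if "0 \<le> r" "r \<le> s" for r
  proof -
    have "Vpol2 0 \<le> Vpol2 r"
    proof (rule DERIV_nonneg_imp_increasing_open[OF \<open>0 \<le> r\<close> _ cont_s(2)])
      fix x assume "0 < x" "x < r"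
      then have "0 < Psi x" using pos that by simp
      then show "\<exists>D. (Vpol2 has_real_derivative D) (at x) \<and> 0 \<le> D"
        using Vpol2'[OF \<open>0 < x\<close>] \<open>0 < lp\<close> by (intro exI conjI) auto
    qed
    then show ?thesis using \<open>Vpol2 0 = 0\<close> by simp
  qed
  show "0 < Psi s"
  proof (rule pos_if_DERIV_ge_neg_linear[OF _ cont_s(1) \<open>0 < Psi 0\<close> Psi'])
    fix x assume "0 < x" "x < s"
    then have "0 < Psi x" "0 \<le> Vpol2 x" using pos Vpol2_nonneg by auto
    \<comment> \<open>Since Vpol2 \<ge> 0 and (Psi + Psir) / (Psi + 1) \<le> max 1 Psir, Psi decays at most exponentially.\<close>
    have "Psi x + Psir \<le> max 1 Psir * (Psi x + 1)"
      using \<open>0 < Psi x\<close> by (auto simp: max_def algebra_simps intro: order_trans[OF _ mult_left_mono])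
    then have "(Psi x + Psir) / (Psi x + 1) \<le> max 1 Psir"
      using \<open>0 < Psi x\<close> by (simp add: divide_le_eq)
    then have "lp * Psi x * ((Psi x + Psir) / (Psi x + 1)) / (Vpol2 x + lpol1)
                 \<le> lp * Psi x * max 1 Psir / lpol1"
      using \<open>0 < Psi x\<close> \<open>0 \<le> Vpol2 x\<close> assms(1-3) by (intro frac_le mult_left_mono) auto
    then show "- (lp * max 1 Psir / lpol1) * Psi x
                 \<le> - lp * (Psi x / (Psi x + 1)) * ((Psi x + Psir) / (Vpol2 x + lpol1))"
      by (simp add: ac_simps)
  qed (use \<open>0 < s\<close> in auto)
qed (use assms in \<open>auto elim: continuous_on_subset\<close>)

lemma g_of_mono:
  assumes "0 \<le> b" "0 \<le> ld" "0 \<le> lp" "0 \<le> Psi" "0 \<le> Vp_of lpol1 Vmat Vcm Vcw Psi"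
    and "0 \<le> x" "x \<le> v"
  shows "0 \<le> g_of b ld lp lpol1 Phis Vmat Vcm Vcw Psi x \<and>
         g_of b ld lp lpol1 Phis Vmat Vcm Vcw Psi x \<le> g_of b ld lp lpol1 Phis Vmat Vcm Vcw Psi v"
proof -
  define A where "A = ld * Phi_of lpol1 Phis Vmat Psi * (Psi + 1) powr (2/3)"
  define B where "B = lp * Psi / Vp_of lpol1 Vmat Vcm Vcw Psi"
  have "0 \<le> A" "0 \<le> B" unfolding A_def B_def Phi_of_def using assms by simp_all
  moreover have "x powr b \<le> v powr b" using assms by (intro powr_mono2) auto
  ultimately have "A * x powr b \<le> A * v powr b" "B * x \<le> B * v"
    using assms by (auto intro: mult_left_mono)
  then show ?thesis
    unfolding g_of_def A_def[symmetric] B_def[symmetric] using \<open>0 \<le> A\<close> \<open>0 \<le> B\<close> \<open>0 \<le> x\<close> by simp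
qed

lemma is_solution_ODEs:
  assumes "is_solution a b la lc ld lm lnn lp lpol1 Psibar Psir Phis m w Vmat Vcm Vcw Psi Vpol2"
    and "0 < t"
  defines "q \<equiv> lp * Psi t / Vp_of lpol1 (Vmat t) (Vcm t) (Vcw t) (Psi t)"
    and "Phi \<equiv> Phi_of lpol1 Phis (Vmat t) (Psi t)"
    and "Sm \<equiv> Sigma_of b (Psi t) (\<lambda>v. m v t)" and "Sw \<equiv> Sigma_of b (Psi t) (\<lambda>v. w v t)"
  shows "(Vmat has_real_derivative q * (Vmat t + lpol1) - Phi * (lc * lnn + ld * Sm + ld * Sw)) (at t)"
    and "(Vcm has_real_derivative q * Vcm t + Phi * (lc * lnn + ld * Sm) - lm * Vcm t) (at t)"
    and "(Vcw has_real_derivative q * Vcw t + ld * Phi * Sw + lm * Vcm t) (at t)"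
    and "(Psi has_real_derivative
           - lp * (Psi t / (Psi t + 1)) * ((Psi t + Psir) / (Vpol2 t + lpol1))) (at t)"
    and "(Vpol2 has_real_derivative lp * (Psi t / (Psi t + 1))) (at t)"
  using assms unfolding is_solution_def Let_def by blast+

lemma is_solution_ODE_data:
  assumes "is_solution a b la lc ld lm lnn lp lpol1 Psibar Psir Phis m w Vmat Vcm Vcw Psi Vpol2"
  shows "continuous_on {0..} Vmat" "continuous_on {0..} Vcm" "continuous_on {0..} Vcw"
    and "continuous_on {0..} Psi" "continuous_on {0..} Vpol2"
    and "Vmat 0 = 0" "Vcm 0 = 0" "Vcw 0 = 0" "Psi 0 = Psibar" "Vpol2 0 = 0"
  using assms unfolding is_solution_def Let_def by blast+

lemma is_solution_Psi_pos:
  assumes "0 < lp" "0 < lpol1" "0 < Psibar" "0 < Psir"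
    and sol: "is_solution a b la lc ld lm lnn lp lpol1 Psibar Psir Phis m w Vmat Vcm Vcw Psi Vpol2"
    and "0 \<le> t"
  shows "0 < Psi t"
proof (rule Psi_pos[of lp lpol1 Psir Psi Vpol2])
  show "0 < Psi 0" using is_solution_ODE_data(9)[OF sol] \<open>0 < Psibar\<close> by simp
qed (use is_solution_ODEs(4,5)[OF sol] is_solution_ODE_data(4,5,10)[OF sol] assms(1,2,4,6) in auto)

lemma is_solution_total_volume_nonneg:
  assumes "0 < lp" "0 < lpol1" "0 < Psibar" "0 < Psir"
    and sol: "is_solution a b la lc ld lm lnn lp lpol1 Psibar Psir Phis m w Vmat Vcm Vcw Psi Vpol2"
    and "0 \<le> t"
  shows "0 \<le> Vmat t + Vcm t + Vcw t"
proof -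
  let ?V = "\<lambda>s. Vmat s + Vcm s + Vcw s"
  have "?V 0 \<le> ?V t"
  proof (rule DERIV_nonneg_imp_increasing_open[OF \<open>0 \<le> t\<close>])
    fix s assume "0 < s" "s < t"
    \<comment> \<open>Nucleation, deposition and maturation only move volume between the three phases.\<close>
    have "(?V has_real_derivative
            lp * Psi s / Vp_of lpol1 (Vmat s) (Vcm s) (Vcw s) (Psi s) * (?V s + lpol1)) (at s)"
      by (rule DERIV_cong[OF DERIV_add[OF DERIV_add[OF is_solution_ODEs(1,2)[OF sol \<open>0 < s\<close>]]
            is_solution_ODEs(3)[OF sol \<open>0 < s\<close>]]])
         (simp add: ring_distribs)
    moreover have "0 \<le> lp * Psi s / Vp_of lpol1 (Vmat s) (Vcm s) (Vcw s) (Psi s) * (?V s + lpol1)"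
    proof (cases "?V s + lpol1 = 0")
      case False
      have "0 < Psi s" using is_solution_Psi_pos[OF assms(1-5), of s] \<open>0 < s\<close> by simp
      with False have "lp * Psi s / Vp_of lpol1 (Vmat s) (Vcm s) (Vcw s) (Psi s) * (?V s + lpol1)
                         = lp * Psi s / (Psi s + 1)"
        by (simp add: Vp_of_def)
      with \<open>0 < Psi s\<close> \<open>0 < lp\<close> show ?thesis by simp
    qed simp
    ultimately show "\<exists>D. (?V has_real_derivative D) (at s) \<and> 0 \<le> D" by blast
  next
    have "continuous_on {0..} ?V"
      using is_solution_ODE_data(1-3)[OF sol] by (intro continuous_intros)
    then show "continuous_on {0..t} ?V" by (rule continuous_on_subset) auto
  qed
  then show ?thesis using is_solution_ODE_data(6-8)[OF sol] by simp
qed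

lemma is_solution_growth_rate_mono:
  assumes "0 \<le> b" "0 \<le> ld" "0 < lp" "0 < lpol1" "0 < Psibar" "0 < Psir"
    and sol: "is_solution a b la lc ld lm lnn lp lpol1 Psibar Psir Phis m w Vmat Vcm Vcw Psi Vpol2"
    and "0 < t" "0 \<le> x" "x \<le> v"
  shows "0 \<le> g_of b ld lp lpol1 Phis (Vmat t) (Vcm t) (Vcw t) (Psi t) x \<and>
         g_of b ld lp lpol1 Phis (Vmat t) (Vcm t) (Vcw t) (Psi t) x
           \<le> g_of b ld lp lpol1 Phis (Vmat t) (Vcm t) (Vcw t) (Psi t) v"
proof (rule g_of_mono)
  have "0 < Psi t" "0 \<le> Vmat t + Vcm t + Vcw t"
    using is_solution_Psi_pos[OF assms(3-7)] is_solution_total_volume_nonneg[OF assms(3-7)] \<open>0 < t\<close>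
    by auto
  then show "0 \<le> Psi t" "0 \<le> Vp_of lpol1 (Vmat t) (Vcm t) (Vcw t) (Psi t)"
    using \<open>0 < lpol1\<close> by (auto simp: Vp_of_def add.assoc)
qed (use assms(1-3,9,10) in auto)

lemma is_solution_m_subsolution:
  assumes "0 \<le> lm"
    and sol: "is_solution a b la lc ld lm lnn lp lpol1 Psibar Psir Phis m w Vmat Vcm Vcw Psi Vpol2"
    and "0 < v" "v < lc" "0 < t"
  shows "\<exists>Dt Dv. ((\<lambda>s. m v s) has_real_derivative Dt) (at t) \<and>
           ((\<lambda>x. g_of b ld lp lpol1 Phis (Vmat t) (Vcm t) (Vcw t) (Psi t) x * m x t)
              has_real_derivative Dv) (at v) \<and>
           Dt \<le> - Dv - loss_of a la (Psi t) (\<lambda>u. m u t) v + gain_of a la (Psi t) (\<lambda>u. m u t) v"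
proof -
  have "0 \<le> lm * m v t"
    using sol \<open>0 \<le> lm\<close> unfolding is_solution_def by simp
  moreover have "\<exists>Dt Dv. ((\<lambda>s. m v s) has_real_derivative Dt) (at t) \<and>
           ((\<lambda>x. g_of b ld lp lpol1 Phis (Vmat t) (Vcm t) (Vcw t) (Psi t) x * m x t)
              has_real_derivative Dv) (at v) \<and>
           Dt = - Dv - lm * m v t - loss_of a la (Psi t) (\<lambda>u. m u t) v + gain_of a la (Psi t) (\<lambda>u. m u t) v"
    using sol assms(3-) unfolding is_solution_def Let_def by blast
  ultimately show ?thesis by force
qed

lemma is_solution_w_subsolution:
  assumes sol: "is_solution a b la lc ld lm lnn lp lpol1 Psibar Psir Phis m w Vmat Vcm Vcw Psi Vpol2"
    and m_vanishes: "\<And>v t. 0 \<le> v \<Longrightarrow> v < lc \<Longrightarrow> 0 \<le> t \<Longrightarrow> m v t = 0"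
    and "0 < v" "v < lc" "0 < t"
  shows "\<exists>Dt Dv. ((\<lambda>s. w v s) has_real_derivative Dt) (at t) \<and>
           ((\<lambda>x. g_of b ld lp lpol1 Phis (Vmat t) (Vcm t) (Vcw t) (Psi t) x * w x t)
              has_real_derivative Dv) (at v) \<and>
           Dt \<le> - Dv - loss_of a la (Psi t) (\<lambda>u. w u t) v + gain_of a la (Psi t) (\<lambda>u. w u t) v"
proof -
  have "\<exists>Dt Dv. ((\<lambda>s. w v s) has_real_derivative Dt) (at t) \<and>
           ((\<lambda>x. g_of b ld lp lpol1 Phis (Vmat t) (Vcm t) (Vcw t) (Psi t) x * w x t)
              has_real_derivative Dv) (at v) \<and>
           Dt = - Dv + lm * m v t - loss_of a la (Psi t) (\<lambda>u. w u t) v + gain_of a la (Psi t) (\<lambda>u. w u t) v"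
    using sol assms(3-5) unfolding is_solution_def Let_def by blast
  moreover have "m v t = 0" using m_vanishes assms(3-5) by simp
  ultimately show ?thesis by force
qed

lemma coagulation_subsolution_vanishes:
  fixes y g :: "real \<Rightarrow> real \<Rightarrow> real" and P :: "real \<Rightarrow> real" and v0 :: real
  assumes "0 < la"
    and y_nonneg: "\<And>v t. 0 \<le> y v t"
    and initial: "\<And>v. 0 \<le> v \<Longrightarrow> y v 0 = 0" and boundary: "\<And>t. 0 \<le> t \<Longrightarrow> y 0 t = 0"
    and cont: "continuous_on {(v, t). 0 \<le> v \<and> v \<noteq> v0 \<and> 0 \<le> t} (\<lambda>(v, t). y v t)"
    and g_mono: "\<And>t x v. 0 < t \<Longrightarrow> 0 \<le> x \<Longrightarrow> x \<le> v \<Longrightarrow> 0 \<le> g x t \<and> g x t \<le> g v t"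
    and int_loss: "\<And>v t. 0 < v \<Longrightarrow> 0 < t \<Longrightarrow>
       set_integrable lborel {0<..} (\<lambda>u. alpha_of a la (P t) v u * y u t)"
    and int_gain: "\<And>v t. 0 < v \<Longrightarrow> 0 < t \<Longrightarrow>
       set_integrable lborel {0<..<v} (\<lambda>u. alpha_of a la (P t) (v - u) u * y (v - u) t * y u t)"
    and subsolution: "\<And>v t. 0 < v \<Longrightarrow> v < v0 \<Longrightarrow> 0 < t \<Longrightarrow>
       \<exists>Dt Dv. ((\<lambda>s. y v s) has_real_derivative Dt) (at t) \<and>
               ((\<lambda>x. g x t * y x t) has_real_derivative Dv) (at v) \<and>
               Dt \<le> - Dv - loss_of a la (P t) (\<lambda>u. y u t) v + gain_of a la (P t) (\<lambda>u. y u t) v"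
    and "0 \<le> v" "v < v0" "0 \<le> t"
  shows "y v t = 0"
proof (rule transport_maximum_principle[where y = y and g = g])
  show "continuous_on ({0..v} \<times> {0..t}) (\<lambda>(v, t). y v t)"
    using cont by (rule continuous_on_subset) (use \<open>v < v0\<close> in auto)
next
  fix v' t' assume "0 < v'" "v' \<le> v" "0 < t'" "t' \<le> t"
    and left_max: "\<And>u. 0 < u \<Longrightarrow> u < v' \<Longrightarrow> y u t' \<le> y v' t'"
  then have "gain_of a la (P t') (\<lambda>u. y u t') v' \<le> loss_of a la (P t') (\<lambda>u. y u t') v'"
    using \<open>0 < la\<close> y_nonneg int_loss int_gain by (intro gain_of_le_loss_of) auto
  with subsolution[of v' t'] \<open>0 < v'\<close> \<open>v' \<le> v\<close> \<open>v < v0\<close> \<open>0 < t'\<close>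
  show "\<exists>Dt Dv. ((\<lambda>s. y v' s) has_real_derivative Dt) (at t') \<and>
          ((\<lambda>x. g x t' * y x t') has_real_derivative Dv) (at v') \<and> Dt \<le> - Dv"
    by force
qed (use assms in auto)

theorem propositionB1:
  fixes a b la lc ld lm lnn lp lpol1 Psibar Psir Phis :: real
    and m w :: "real \<Rightarrow> real \<Rightarrow> real"
    and Vmat Vcm Vcw Psi Vpol2 :: "real \<Rightarrow> real"
  assumes "0 < b" and "b < 1"
    and "0 < la" and "0 < lc" and "0 < ld" and "0 < lm" and "0 < lnn" and "0 < lp"
    and "0 < lpol1" and "0 < Psibar" and "0 < Psir" and "0 < Phis" and "Phis < 1"
    and "is_solution a b la lc ld lm lnn lp lpol1 Psibar Psir Phis m w Vmat Vcm Vcw Psi Vpol2"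
  shows "\<forall>v t. 0 \<le> v \<and> v < lc \<and> 0 \<le> t \<longrightarrow> m v t = 0 \<and> w v t = 0"
proof -
  note sol = assms(14)
  note facts = sol[unfolded is_solution_def Let_def]
  let ?g = "\<lambda>x t. g_of b ld lp lpol1 Phis (Vmat t) (Vcm t) (Vcw t) (Psi t) x"
  have g_mono: "0 \<le> ?g x t \<and> ?g x t \<le> ?g v t" if "0 < t" "0 \<le> x" "x \<le> v" for t x v
    using is_solution_growth_rate_mono[OF _ _ assms(8-11) sol that] assms(1,5) by simp
  have m0: "m v t = 0" if "0 \<le> v" "v < lc" "0 \<le> t" for v t
    by (rule coagulation_subsolution_vanishes[where y = m and g = ?g and P = Psi,
          OF assms(3) _ _ _ _ g_mono _ _ is_solution_m_subsolution[OF less_imp_le[OF assms(6)] sol] that])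
       (use facts in blast)+
  have w0: "w v t = 0" if "0 \<le> v" "v < lc" "0 \<le> t" for v t
    by (rule coagulation_subsolution_vanishes[where y = w and g = ?g and P = Psi,
          OF assms(3) _ _ _ _ g_mono _ _ is_solution_w_subsolution[OF sol m0] that])
       (use facts in blast)+
  show ?thesis using m0 w0 by blast
qed

end
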